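(* Let $q\ge 3$ be a prime power, $n\ge1$, and let $C\subseteq\mathbb{F}_q^n$ be a non-zero linear code of dimension $1\le t\le n$. For any integer $1\le r\le t$, $$d_r(C)=\min\{\dim_{\mathbb{F}_q}(A): A\in\mathcal{A}^H_q(n),\ \dim_{\mathbb{F}_q}(A\cap C)\ge r\}.$$
   Context: For $v\in\mathbb{F}_q^n$, $\mathrm{wt}(v):=|\{i: v_i\ne0\}|$; for a linear code $C$, $\mathrm{maxwt}(C):=\max\{\mathrm{wt}(c):c\in C\}$. One always has $\dim_{\mathbb{F}_q}(C)\le\mathrm{maxwt}(C)$; $\mathcal{A}^H_q(n)$ is the set of linear codes in $\mathbb{F}_q^n$ attaining equality (optimal linear anticodes). The support of a subspace $D$ is $\chi(D):=\{i\in\{1,\dots,n\}:\exists d\in D,\ d_i\ne0\}$, and the $r$-th generalized Hamming weight is $d_r(C):=\min\{|\chi(D)|: D\subseteq C,\ \dim_{\mathbb{F}_q}(D)=r\}$. *)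

theory Defs
  imports "HOL-Analysis.Analysis"
begin

text \<open>Ambient space F_q^n is rendered as 'a ^ 'n with 'a a finite field
  (so CARD('a) is a prime power q) and n = CARD('n). Linear codes are
  vec.subspace's, dimension is vec.dim (dimension over 'a).\<close>

definition wt :: "('a::zero) ^ 'n \<Rightarrow> nat" where
  "wt v = card {i. v $ i \<noteq> 0}"

definition maxwt :: "(('a::zero) ^ 'n) set \<Rightarrow> nat" where
  "maxwt C = Max (wt ` C)"

definition supp :: "(('a::zero) ^ 'n) set \<Rightarrow> 'n set" where
  "supp D = {i. \<exists>d\<in>D. d $ i \<noteq> 0}"

definition anticodes :: "(('a::{finite,field}) ^ ('n::finite)) set set" where
  "anticodes = {A. vec.subspace A \<and> vec.dim A = maxwt A}"

definition ghw :: "(('a::{finite,field}) ^ ('n::finite)) set \<Rightarrow> nat \<Rightarrow> nat" where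
  "ghw C r = Min {card (supp D) | D. vec.subspace D \<and> D \<subseteq> C \<and> vec.dim D = r}"

end

theory Submission
  imports Defs
begin

text \<open>A support D of a subspace of dimension r lies in the coordinate subspace on supp D,
  which is an anticode of dimension |supp D|; this gives one inequality. For the other, an
  optimal anticode A over a field with at least three elements satisfies |supp A| \<le> dim A:
  pick a minimal information set I of A and the systematic generators g_i of A (g_i is 1 at i and
  0 on the rest of I). Then dim A \<le> |I|, and if some l \<in> supp A lies outside I, suitable nonzero
  coefficients (one of them chosen to avoid two values, which needs q \<ge> 3) produce a word of
  A that is nonzero on I \<union> {l}, so maxwt A > |I| \<ge> dim A. Hence supp A \<subseteq> I and any subspace
  D \<subseteq> A \<inter> C of dimension r has |supp D| \<le> |supp A| \<le> dim A.\<close>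

lemma card_le_wt:
  assumes "\<forall>i\<in>J. v $ i \<noteq> 0"
  shows "card J \<le> wt (v :: ('a::zero) ^ ('n::finite))"
  unfolding wt_def using assms by (intro card_mono) auto

lemma wt_le_maxwt:
  fixes A :: "(('a::{finite,zero}) ^ ('n::finite)) set"
  assumes "v \<in> A"
  shows "wt v \<le> maxwt A"
  unfolding maxwt_def using assms by (intro Max_ge) auto

lemma card_supp_mono:
  fixes A :: "(('a::zero) ^ ('n::finite)) set"
  shows "D \<subseteq> A \<Longrightarrow> card (supp D) \<le> card (supp A)"
  unfolding supp_def by (intro card_mono) auto

lemma exists_avoiding_two:
  fixes a b :: "'a::finite"
  assumes "CARD('a) \<ge> 3"
  obtains x where "x \<noteq> a" "x \<noteq> b"
proof -
  have "card {a, b} \<le> 2"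
    by (simp add: card_insert_if)
  then have "card {a, b} < CARD('a)"
    using assms by linarith
  then have "\<not> UNIV \<subseteq> {a, b}"
    using card_mono[of "{a, b}" UNIV] by auto
  then show ?thesis
    using that by blast
qed

definition information_set :: "(('a::zero) ^ 'n) set \<Rightarrow> 'n set \<Rightarrow> bool" where
  "information_set A I \<longleftrightarrow> (\<forall>a\<in>A. (\<forall>i\<in>I. a $ i = 0) \<longrightarrow> a = 0)"

lemma minimal_information_set_exists:
  fixes A :: "(('a::zero) ^ ('n::finite)) set"
  obtains I where "information_set A I" "\<And>i. i \<in> I \<Longrightarrow> \<not> information_set A (I - {i})"
proof -
  have "information_set A UNIV"
    unfolding information_set_def by (auto simp: vec_eq_iff)
  then obtain I where I: "information_set A I"
    and least: "\<And>J. information_set A J \<Longrightarrow> card I \<le> card J"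
    using ex_has_least_nat[of "information_set A" UNIV card] by blast
  have "\<not> information_set A (I - {i})" if "i \<in> I" for i
    using least[of "I - {i}"] card_Diff1_less[OF finite that] by linarith
  with I that show ?thesis by blast
qed

lemma systematic_generators_exist:
  fixes A :: "(('a::field) ^ ('n::finite)) set"
  assumes "vec.subspace A" "information_set A I"
    and "\<And>i. i \<in> I \<Longrightarrow> \<not> information_set A (I - {i})"
  obtains g where "\<And>i. i \<in> I \<Longrightarrow> g i \<in> A"
    and "\<And>i j. i \<in> I \<Longrightarrow> j \<in> I \<Longrightarrow> g i $ j = (if j = i then 1 else 0)"
proof -
  have "\<exists>g\<in>A. \<forall>j\<in>I. g $ j = (if j = i then 1 else 0)" if i: "i \<in> I" for i
  proof -
    obtain a where a: "a \<in> A" "a \<noteq> 0" "\<forall>j\<in>I - {i}. a $ j = 0"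
      using assms(3)[OF i] unfolding information_set_def by blast
    have "a $ i \<noteq> 0"
      using a assms(2) unfolding information_set_def by (metis Diff_iff singletonD)
    with a show ?thesis
      by (intro bexI[of _ "inverse (a $ i) *s a"]) (auto intro: vec.subspace_scale[OF assms(1)])
  qed
  then show ?thesis
    using that by metis
qed

lemma sum_systematic_nth:
  assumes "\<And>i j. i \<in> I \<Longrightarrow> j \<in> I \<Longrightarrow> g i $ j = (if j = i then 1 else 0)" "j \<in> I"
  shows "(\<Sum>i\<in>I. c i *s g i) $ j = (c j :: 'a::field)"
proof -
  have "(\<Sum>i\<in>I. c i *s g i) $ j = (\<Sum>i\<in>I. c i * g i $ j)"
    by (simp add: sum_component)
  also have "\<dots> = (\<Sum>i\<in>I. if i = j then c i else 0)"
    by (rule sum.cong) (use assms in auto)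
  also have "\<dots> = c j"
    using assms(2) by simp
  finally show ?thesis .
qed

lemma information_set_expansion:
  fixes A :: "(('a::field) ^ ('n::finite)) set"
  assumes "vec.subspace A" "information_set A I"
    and "\<And>i. i \<in> I \<Longrightarrow> g i \<in> A"
    and "\<And>i j. i \<in> I \<Longrightarrow> j \<in> I \<Longrightarrow> g i $ j = (if j = i then 1 else 0)"
    and "a \<in> A"
  shows "a = (\<Sum>i\<in>I. a $ i *s g i)"
proof -
  have "(\<Sum>i\<in>I. a $ i *s g i) \<in> A"
    using assms(1,3) by (intro vec.subspace_sum vec.subspace_scale) auto
  then have "a - (\<Sum>i\<in>I. a $ i *s g i) \<in> A"
    using vec.subspace_diff[OF assms(1,5)] by blast
  moreover have "\<forall>j\<in>I. (a - (\<Sum>i\<in>I. a $ i *s g i)) $ j = 0"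
    using sum_systematic_nth[OF assms(4)] by simp
  ultimately show ?thesis
    using assms(2) unfolding information_set_def by auto
qed

lemma dim_le_card_information_set:
  fixes A :: "(('a::field) ^ ('n::finite)) set"
  assumes "vec.subspace A" "information_set A I"
    and "\<And>i. i \<in> I \<Longrightarrow> g i \<in> A"
    and "\<And>i j. i \<in> I \<Longrightarrow> j \<in> I \<Longrightarrow> g i $ j = (if j = i then 1 else 0)"
  shows "vec.dim A \<le> card I"
proof -
  have "A \<subseteq> vec.span (g ` I)"
  proof
    fix a assume "a \<in> A"
    then have "a = (\<Sum>i\<in>I. a $ i *s g i)"
      using information_set_expansion[OF assms] by blast
    also have "\<dots> \<in> vec.span (g ` I)"
      by (intro vec.span_sum vec.span_scale vec.span_base) auto
    finally show "a \<in> vec.span (g ` I)" .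
  qed
  then have "vec.dim A \<le> card (g ` I)"
    by (intro vec.dim_le_card) auto
  also have "\<dots> \<le> card I"
    by (rule card_image_le) simp
  finally show ?thesis .
qed

lemma systematic_combination_nonzero_outside:
  fixes g :: "'n::finite \<Rightarrow> ('a::{finite,field}) ^ 'n"
  assumes "CARD('a) \<ge> 3"
    and "\<And>i j. i \<in> I \<Longrightarrow> j \<in> I \<Longrightarrow> g i $ j = (if j = i then 1 else 0)"
    and "j \<in> I" "g j $ l \<noteq> 0" "l \<notin> I"
  obtains c where "\<forall>i\<in>insert l I. (\<Sum>k\<in>I. c k *s g k) $ i \<noteq> 0"
proof -
  define s where "s = (\<Sum>k\<in>I - {j}. g k $ l)"
  obtain \<mu> where \<mu>: "\<mu> \<noteq> 0" "\<mu> \<noteq> - s / g j $ l"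
    using exists_avoiding_two[OF assms(1)] by metis
  define c where "c k = (if k = j then \<mu> else 1)" for k
  have "(\<Sum>k\<in>I. c k *s g k) $ l = c j * g j $ l + (\<Sum>k\<in>I - {j}. c k * g k $ l)"
    using assms(3) by (simp add: sum_component sum.remove)
  also have "\<dots> = \<mu> * g j $ l + s"
    unfolding c_def s_def by simp
  also have "\<dots> \<noteq> 0"
    using \<mu>(2) assms(4) by (simp add: field_simps add_eq_0_iff)
  finally have "(\<Sum>k\<in>I. c k *s g k) $ l \<noteq> 0" .
  moreover have "(\<Sum>k\<in>I. c k *s g k) $ i \<noteq> 0" if "i \<in> I" for i
    using sum_systematic_nth[OF assms(2) that] \<mu>(1) by (simp add: c_def)
  ultimately show ?thesis
    using that by blast
qed

lemma card_supp_le_maxwt_or_dim_less_maxwt: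
  fixes A :: "(('a::{finite,field}) ^ ('n::finite)) set"
  assumes "CARD('a) \<ge> 3" "vec.subspace A"
  shows "card (supp A) \<le> maxwt A \<or> vec.dim A < maxwt A"
proof -
  obtain I where I: "information_set A I" "\<And>i. i \<in> I \<Longrightarrow> \<not> information_set A (I - {i})"
    using minimal_information_set_exists[of A] by blast
  obtain g where g: "\<And>i. i \<in> I \<Longrightarrow> g i \<in> A"
    "\<And>i j. i \<in> I \<Longrightarrow> j \<in> I \<Longrightarrow> g i $ j = (if j = i then 1 else 0)"
    using systematic_generators_exist[OF assms(2) I] by blast
  have combination_in_A: "(\<Sum>i\<in>I. c i *s g i) \<in> A" for c
    using assms(2) g(1) by (intro vec.subspace_sum vec.subspace_scale) auto
  show ?thesis
  proof (cases "supp A \<subseteq> I")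
    case True
    have "card (supp A) \<le> card I"
      using True by (intro card_mono) auto
    also have "\<dots> \<le> wt (\<Sum>i\<in>I. 1 *s g i)"
      by (intro card_le_wt) (use sum_systematic_nth[OF g(2), where c = "\<lambda>_. 1"] in simp)
    also have "\<dots> \<le> maxwt A"
      by (rule wt_le_maxwt[OF combination_in_A])
    finally show ?thesis ..
  next
    case False
    then obtain l a where l: "l \<notin> I" and a: "a \<in> A" "a $ l \<noteq> 0"
      unfolding supp_def by blast
    have "a $ l = (\<Sum>i\<in>I. a $ i *s g i) $ l"
      using information_set_expansion[OF assms(2) I(1) g a(1)] by (rule arg_cong)
    also have "\<dots> = (\<Sum>i\<in>I. a $ i * g i $ l)"
      by (simp add: sum_component)
    finally have "a $ l = (\<Sum>i\<in>I. a $ i * g i $ l)" .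
    then obtain j where j: "j \<in> I" "g j $ l \<noteq> 0"
      using a(2) sum.neutral[of I "\<lambda>i. a $ i * g i $ l"] by force
    obtain c where "\<forall>i\<in>insert l I. (\<Sum>k\<in>I. c k *s g k) $ i \<noteq> 0"
      using systematic_combination_nonzero_outside[OF assms(1) g(2) j l] .
    then have "card (insert l I) \<le> maxwt A"
      using wt_le_maxwt[OF combination_in_A] by (meson card_le_wt le_trans)
    then have "card I < maxwt A"
      using l by simp
    then show ?thesis
      using dim_le_card_information_set[OF assms(2) I(1) g] by linarith
  qed
qed

lemma card_supp_le_dim_if_anticode:
  fixes A :: "(('a::{finite,field}) ^ ('n::finite)) set"
  assumes "CARD('a) \<ge> 3" "A \<in> anticodes"
  shows "card (supp A) \<le> vec.dim A"
  using assms card_supp_le_maxwt_or_dim_less_maxwt[OF assms(1)] unfolding anticodes_def by fastforce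

definition coordinate_subspace :: "'n set \<Rightarrow> (('a::zero) ^ 'n) set" where
  "coordinate_subspace S = {x. \<forall>i. i \<notin> S \<longrightarrow> x $ i = 0}"

lemma dim_coordinate_subspace:
  "vec.dim (coordinate_subspace S :: (('a::field) ^ ('n::finite)) set) = card S"
  unfolding coordinate_subspace_def by (rule dim_substandard_cart)

lemma subset_coordinate_subspace_supp: "D \<subseteq> coordinate_subspace (supp D)"
  unfolding coordinate_subspace_def supp_def by auto

lemma maxwt_coordinate_subspace:
  "maxwt (coordinate_subspace S :: (('a::{finite,field}) ^ ('n::finite)) set) = card S"
proof -
  let ?V = "coordinate_subspace S :: ('a ^ 'n) set"
  define e :: "'a ^ 'n" where "e = (\<chi> i. if i \<in> S then 1 else 0)"
  have e: "e \<in> ?V"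
    unfolding coordinate_subspace_def e_def by simp
  have "wt x \<le> card S" if "x \<in> ?V" for x
    using that unfolding wt_def coordinate_subspace_def by (auto intro!: card_mono)
  then have "maxwt ?V \<le> card S"
    unfolding maxwt_def using e by (intro Max.boundedI) auto
  moreover have "card S \<le> wt e"
    by (rule card_le_wt) (simp add: e_def)
  ultimately show ?thesis
    using wt_le_maxwt[OF e] by linarith
qed

lemma coordinate_subspace_in_anticodes:
  "(coordinate_subspace S :: (('a::{finite,field}) ^ ('n::finite)) set) \<in> anticodes"
  unfolding anticodes_def
  using subspace_substandard_cart[of "\<lambda>i. i \<notin> S"]
  by (simp add: coordinate_subspace_def[symmetric] dim_coordinate_subspace maxwt_coordinate_subspace)

lemma exists_subspace_of_dim:
  fixes W :: "(('a::field) ^ ('n::finite)) set"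
  assumes "vec.subspace W" "r \<le> vec.dim W"
  obtains D where "vec.subspace D" "D \<subseteq> W" "vec.dim D = r"
proof -
  obtain B where B: "B \<subseteq> W" "vec.independent B" "card B = vec.dim W"
    by (metis vec.basis_exists)
  obtain B' where B': "B' \<subseteq> B" "card B' = r"
    using obtain_subset_with_card_n[of r B] B(3) assms(2) by auto
  have "vec.span B' \<subseteq> W"
    using B(1) B'(1) assms(1) by (intro vec.span_minimal) auto
  moreover have "vec.dim (vec.span B') = r"
    using vec.dim_span_eq_card_independent vec.independent_mono B(2) B' by metis
  ultimately show ?thesis
    using that vec.subspace_span by blast
qed

lemma anticode_of_subcode:
  fixes D C :: "(('a::{finite,field}) ^ ('n::finite)) set"
  assumes "D \<subseteq> C" "vec.dim D = r"
  shows "\<exists>A\<in>anticodes. r \<le> vec.dim (A \<inter> C) \<and> vec.dim A = card (supp D)"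
proof
  let ?A = "coordinate_subspace (supp D) :: ('a ^ 'n) set"
  have "D \<subseteq> ?A \<inter> C"
    using assms(1) subset_coordinate_subspace_supp by blast
  then show "r \<le> vec.dim (?A \<inter> C) \<and> vec.dim ?A = card (supp D)"
    using assms(2) vec.dim_subset dim_coordinate_subspace by metis
qed (rule coordinate_subspace_in_anticodes)

lemma subcode_of_anticode:
  fixes A C :: "(('a::{finite,field}) ^ ('n::finite)) set"
  assumes "CARD('a) \<ge> 3" "vec.subspace C" "A \<in> anticodes" "r \<le> vec.dim (A \<inter> C)"
  obtains D where "vec.subspace D" "D \<subseteq> C" "vec.dim D = r" "card (supp D) \<le> vec.dim A"
proof -
  have "vec.subspace (A \<inter> C)"
    using assms(2,3) vec.subspace_inter unfolding anticodes_def by blast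
  then obtain D where D: "vec.subspace D" "D \<subseteq> A \<inter> C" "vec.dim D = r"
    using assms(4) exists_subspace_of_dim by blast
  have "card (supp D) \<le> card (supp A)"
    using D(2) card_supp_mono by blast
  also have "\<dots> \<le> vec.dim A"
    using card_supp_le_dim_if_anticode[OF assms(1,3)] .
  finally show ?thesis
    using that D by blast
qed

lemma Min_eq_if_mutually_dominated:
  fixes X Y :: "'a::linorder set"
  assumes "finite X" "finite Y" "X \<noteq> {}"
    and "\<And>x. x \<in> X \<Longrightarrow> \<exists>y\<in>Y. y \<le> x" "\<And>y. y \<in> Y \<Longrightarrow> \<exists>x\<in>X. x \<le> y"
  shows "Min X = Min Y"
proof -
  have "Y \<noteq> {}"
    using assms(3,4) by blast
  with assms show ?thesis
    by (meson Min_in Min_le antisym order_trans)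
qed

theorem theorem2p7:
  fixes C :: "(('a::{finite,field}) ^ ('n::finite)) set" and r :: nat
  assumes "CARD('a) \<ge> 3"
    and "vec.subspace C" and "C \<noteq> {0}"
    and "1 \<le> r" and "r \<le> vec.dim C"
  shows "ghw C r = Min {vec.dim A | A. A \<in> anticodes \<and> vec.dim (A \<inter> C) \<ge> r}"
proof -
  define X where "X = {card (supp D) | D. vec.subspace D \<and> D \<subseteq> C \<and> vec.dim D = r}"
  define Y where "Y = {vec.dim A | A. A \<in> anticodes \<and> vec.dim (A \<inter> C) \<ge> r}"
  have "Min X = Min Y"
  proof (rule Min_eq_if_mutually_dominated)
    show "finite X"
      unfolding X_def by (rule finite_subset[of _ "{..CARD('n)}"]) (auto intro: card_mono)
    show "finite Y"
      unfolding Y_def by (rule finite_subset[of _ "{..CARD('n)}"]) (auto simp: dim_subset_UNIV_cart_gen)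
    show "X \<noteq> {}"
      unfolding X_def using exists_subspace_of_dim[OF assms(2,5)] by blast
  next
    fix x assume "x \<in> X"
    then obtain D where "x = card (supp D)" "D \<subseteq> C" "vec.dim D = r"
      unfolding X_def by blast
    then obtain A where "A \<in> anticodes" "r \<le> vec.dim (A \<inter> C)" "vec.dim A = x"
      using anticode_of_subcode by blast
    then have "x \<in> Y"
      unfolding Y_def by blast
    then show "\<exists>y\<in>Y. y \<le> x"
      by blast
  next
    fix y assume "y \<in> Y"
    then obtain A where "y = vec.dim A" "A \<in> anticodes" "r \<le> vec.dim (A \<inter> C)"
      unfolding Y_def by blast
    then obtain D where "vec.subspace D" "D \<subseteq> C" "vec.dim D = r" "card (supp D) \<le> y"
      using subcode_of_anticode[OF assms(1,2)] by blast
    then show "\<exists>x\<in>X. x \<le> y"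
      unfolding X_def by blast
  qed
  then show ?thesis
    unfolding ghw_def X_def Y_def .
qed

end
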